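(* For each $N\ge2$ let $(\nu_r^{(1:N)})_{r\ge1}$ be random vectors of non-negative integers with $\sum_i\nu_r^{(i)}=N$, and assume that for all real $0 \le s < u$, $$\lim_{N\to\infty}\mathbb{E}\Bigg[\sum_{r=\tau_N(s)+1}^{\tau_N(u)} c_N(r)^2\Bigg] = 0.$$ Fix $k\in\mathbb{N}$, times $0=t_0\le t_1\le\cdots\le t_k\le t$, and strictly positive constants $K_1,\dots,K_k$. Define $$E_N := \bigcap_{j=1}^k\Bigg\{\sum_{s=\tau_N(t_{j-1})+1}^{\tau_N(t_j)} c_N(s)^2 \le K_j\Bigg\}.$$ Then $\lim_{N\to\infty}\mathbb{P}[E_N]=1$.
   Context: $(x)_k$ is the falling factorial; $c_N(r) := \frac{1}{(N)_2}\sum_i(\nu_r^{(i)})_2$; $\tau_N(u) := \inf\{s\in\{0,1,2,\dots\}: \sum_{r=1}^s c_N(r)\ge u\}$ (so $\tau_N(0)=0$); sums with upper limit below lower limit are $0$. *)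

theory Defs
  imports "HOL-Probability.Probability"
begin

definition ff2 :: "nat \<Rightarrow> real" where
  "ff2 x = real x * (real x - 1)"

definition cN :: "nat \<Rightarrow> (nat \<Rightarrow> nat) \<Rightarrow> real" where
  "cN N v = (\<Sum>i=1..N. ff2 (v i)) / ff2 N"

definition tau :: "(nat \<Rightarrow> real) \<Rightarrow> real \<Rightarrow> enat" where
  "tau c u = (if \<exists>s. (\<Sum>r=1..s. c r) \<ge> u then enat (LEAST s. (\<Sum>r=1..s. c r) \<ge> u) else \<infinity>)"

definition sqsum :: "(nat \<Rightarrow> real) \<Rightarrow> enat \<Rightarrow> enat \<Rightarrow> ennreal" where
  "sqsum c a b = (\<Sum>r. if a < enat r \<and> enat r \<le> b then ennreal ((c r)\<^sup>2) else 0)"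

end

theory Submission
  imports Defs
begin

text \<open>By Markov's inequality each block sum \<open>\<Sum>\<^sub>s c\<^sub>N(s)\<^sup>2\<close> over \<open>(\<tau>\<^sub>N(t\<^sub>j\<^sub>-\<^sub>1), \<tau>\<^sub>N(t\<^sub>j)]\<close>
  exceeds \<open>K\<^sub>j\<close> with probability at most \<open>K\<^sub>j\<^sup>-\<^sup>1\<close> times its expectation, which tends to 0 by
  hypothesis (blocks with \<open>t\<^sub>j\<^sub>-\<^sub>1 = t\<^sub>j\<close> are empty). A union bound over the finitely many
  blocks shows that \<open>P[E\<^sub>N\<^sup>c] \<rightarrow> 0\<close>.\<close>

lemma tau_eq_enat_iff:
  "tau c u = enat n \<longleftrightarrow> (\<Sum>r=1..n. c r) \<ge> u \<and> (\<forall>m<n. (\<Sum>r=1..m. c r) < u)"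
proof
  assume tau: "tau c u = enat n"
  then have ex: "\<exists>s. (\<Sum>r=1..s. c r) \<ge> u"
    unfolding tau_def by (auto split: if_splits)
  with tau have "n = (LEAST s. (\<Sum>r=1..s. c r) \<ge> u)"
    unfolding tau_def by auto
  with ex show "(\<Sum>r=1..n. c r) \<ge> u \<and> (\<forall>m<n. (\<Sum>r=1..m. c r) < u)"
    by (metis LeastI_ex not_less_Least not_le)
next
  assume n: "(\<Sum>r=1..n. c r) \<ge> u \<and> (\<forall>m<n. (\<Sum>r=1..m. c r) < u)"
  then have "(LEAST s. (\<Sum>r=1..s. c r) \<ge> u) = n"
    by (intro Least_equality) (auto simp: not_less[symmetric])
  with n show "tau c u = enat n"
    unfolding tau_def by auto
qed

lemma tau_eq_infinity_iff: "tau c u = \<infinity> \<longleftrightarrow> (\<forall>s. (\<Sum>r=1..s. c r) < u)"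
  unfolding tau_def by (auto simp: not_le) (meson not_le)

lemma measurable_tau:
  assumes "\<And>r. r \<ge> 1 \<Longrightarrow> (\<lambda>\<omega>. C \<omega> r) \<in> borel_measurable M"
  shows "(\<lambda>\<omega>. tau (C \<omega>) u) \<in> M \<rightarrow>\<^sub>M count_space UNIV"
  unfolding measurable_count_space_eq2_countable
proof (intro conjI ballI)
  have partial_sums [measurable]: "(\<lambda>\<omega>. \<Sum>r=1..n. C \<omega> r) \<in> borel_measurable M" for n
    using assms by (intro borel_measurable_sum) auto
  fix a :: enat
  show "(\<lambda>\<omega>. tau (C \<omega>) u) -` {a} \<inter> space M \<in> sets M"
  proof (cases a)
    case (enat n)
    then have "(\<lambda>\<omega>. tau (C \<omega>) u) -` {a} \<inter> space M =
        {\<omega>\<in>space M. (\<Sum>r=1..n. C \<omega> r) \<ge> u \<and> (\<forall>m\<in>{..<n}. (\<Sum>r=1..m. C \<omega> r) < u)}"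
      by (auto simp: tau_eq_enat_iff)
    also have "\<dots> \<in> sets M"
      by measurable
    finally show ?thesis .
  next
    case infinity
    then have "(\<lambda>\<omega>. tau (C \<omega>) u) -` {a} \<inter> space M = {\<omega>\<in>space M. \<forall>s. (\<Sum>r=1..s. C \<omega> r) < u}"
      by (auto simp: tau_eq_infinity_iff)
    also have "\<dots> \<in> sets M"
      by measurable
    finally show ?thesis .
  qed
qed auto

lemma borel_measurable_sqsum:
  assumes C: "\<And>r. r \<ge> 1 \<Longrightarrow> (\<lambda>\<omega>. C \<omega> r) \<in> borel_measurable M"
    and A: "A \<in> M \<rightarrow>\<^sub>M count_space UNIV" and B: "B \<in> M \<rightarrow>\<^sub>M count_space UNIV"
  shows "(\<lambda>\<omega>. sqsum (C \<omega>) (A \<omega>) (B \<omega>)) \<in> borel_measurable M"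
  unfolding sqsum_def
proof (rule borel_measurable_suminf_order)
  fix r
  show "(\<lambda>\<omega>. if A \<omega> < enat r \<and> enat r \<le> B \<omega> then ennreal ((C \<omega> r)\<^sup>2) else 0)
      \<in> borel_measurable M"
  proof (cases "r = 0")
    case True
    then show ?thesis by (simp add: enat_0)
  next
    case False
    have "(\<lambda>\<omega>. A \<omega> < enat r \<and> enat r \<le> B \<omega>) \<in> M \<rightarrow>\<^sub>M count_space UNIV"
      using measurable_compose[OF measurable_Pair[OF A B],
          of "\<lambda>(a, b). a < enat r \<and> enat r \<le> b" "count_space UNIV"]
      by (simp add: pair_measure_countable)
    then have window: "{\<omega> \<in> space M. A \<omega> < enat r \<and> enat r \<le> B \<omega>} \<in> sets M"
      by (simp add: pred_def[symmetric])
    have "(\<lambda>\<omega>. C \<omega> r) \<in> borel_measurable M"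
      using False C by simp
    then have "(\<lambda>\<omega>. ennreal ((C \<omega> r)\<^sup>2)) \<in> borel_measurable M"
      by measurable
    then show ?thesis
      by (intro measurable_If[OF _ _ window]) auto
  qed
qed

lemma sqsum_same: "sqsum c a a = 0"
  unfolding sqsum_def by (simp add: not_le[symmetric])

lemma borel_measurable_cN:
  assumes "\<And>i. i \<in> {1..N} \<Longrightarrow> (\<lambda>\<omega>. v \<omega> i) \<in> M \<rightarrow>\<^sub>M count_space UNIV"
  shows "(\<lambda>\<omega>. cN N (v \<omega>)) \<in> borel_measurable M"
proof -
  have "(\<lambda>\<omega>. ff2 (v \<omega> i)) \<in> borel_measurable M" if "i \<in> {1..N}" for i
    using measurable_compose[OF assms[OF that], of ff2 borel] by simp
  then show ?thesis
    unfolding cN_def by (intro borel_measurable_divide borel_measurable_sum) auto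
qed

lemma chain_from_zero_nonneg:
  fixes t :: "nat \<Rightarrow> real"
  assumes "t 0 = 0" and "\<And>j. j \<in> {1..k} \<Longrightarrow> t (j - 1) \<le> t j" and "i \<le> k"
  shows "0 \<le> t i"
  using assms(3)
proof (induction i)
  case (Suc i)
  then show ?case using assms(2)[of "Suc i"] by auto
qed (use assms(1) in simp)

lemma emeasure_gt_le_nn_integral:
  fixes X :: "'a \<Rightarrow> ennreal" and K :: real
  assumes "X \<in> borel_measurable M" and "K > 0"
  shows "emeasure M {x\<in>space M. ennreal K < X x} \<le> ennreal (1 / K) * (\<integral>\<^sup>+x. X x \<partial>M)"
proof -
  have "{x\<in>space M. ennreal K < X x} \<subseteq> {x\<in>space M. 1 \<le> ennreal (1 / K) * X x}"
  proof safe
    fix x assume "ennreal K < X x"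
    then have "ennreal (1 / K) * ennreal K \<le> ennreal (1 / K) * X x"
      by (intro mult_left_mono) auto
    then show "1 \<le> ennreal (1 / K) * X x"
      using \<open>K > 0\<close> by (simp flip: ennreal_mult)
  qed
  then have "emeasure M {x\<in>space M. ennreal K < X x}
      \<le> emeasure M {x\<in>space M. 1 \<le> ennreal (1 / K) * X x}"
    using assms(1) by (intro emeasure_mono) measurable
  also have "\<dots> \<le> ennreal (1 / K) * (\<integral>\<^sup>+x. X x * indicator (space M) x \<partial>M)"
    using assms(1) by (intro nn_integral_Markov_inequality) auto
  also have "(\<integral>\<^sup>+x. X x * indicator (space M) x \<partial>M) = (\<integral>\<^sup>+x. X x \<partial>M)"
    by (intro nn_integral_cong) auto
  finally show ?thesis .
qed

lemma tendsto_emeasure_gt_zero: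
  fixes X :: "nat \<Rightarrow> 'a \<Rightarrow> ennreal" and K :: real
  assumes meas: "\<forall>\<^sub>F N in sequentially. X N \<in> borel_measurable (M N)"
    and lim: "(\<lambda>N. \<integral>\<^sup>+x. X N x \<partial>M N) \<longlonglongrightarrow> 0" and "K > 0"
  shows "(\<lambda>N. emeasure (M N) {x\<in>space (M N). ennreal K < X N x}) \<longlonglongrightarrow> 0"
proof (rule tendsto_sandwich[OF _ _ tendsto_const])
  show "\<forall>\<^sub>F N in sequentially.
      emeasure (M N) {x\<in>space (M N). ennreal K < X N x} \<le> ennreal (1 / K) * (\<integral>\<^sup>+x. X N x \<partial>M N)"
    using meas by eventually_elim (use \<open>K > 0\<close> emeasure_gt_le_nn_integral in blast)
  show "(\<lambda>N. ennreal (1 / K) * (\<integral>\<^sup>+x. X N x \<partial>M N)) \<longlonglongrightarrow> 0"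
    using ennreal_tendsto_cmult[OF _ lim, of "ennreal (1 / K)"] by simp
qed simp

lemma tendsto_measure_diff_Union_one:
  assumes prob: "\<forall>\<^sub>F N in sequentially. prob_space (M N)" and "finite J"
    and sets: "\<forall>\<^sub>F N in sequentially. \<forall>j\<in>J. A N j \<in> sets (M N)"
    and lim: "\<And>j. j \<in> J \<Longrightarrow> (\<lambda>N. emeasure (M N) (A N j)) \<longlonglongrightarrow> 0"
  shows "(\<lambda>N. measure (M N) (space (M N) - (\<Union>j\<in>J. A N j))) \<longlonglongrightarrow> 1"
proof -
  have "(\<lambda>N. emeasure (M N) (\<Union>j\<in>J. A N j)) \<longlonglongrightarrow> 0"
  proof (rule tendsto_sandwich[OF _ _ tendsto_const])
    show "\<forall>\<^sub>F N in sequentially. emeasure (M N) (\<Union>j\<in>J. A N j) \<le> (\<Sum>j\<in>J. emeasure (M N) (A N j))"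
      using sets by eventually_elim (intro emeasure_subadditive_finite \<open>finite J\<close>, blast)
    show "(\<lambda>N. \<Sum>j\<in>J. emeasure (M N) (A N j)) \<longlonglongrightarrow> 0"
      using tendsto_sum[of J "\<lambda>j N. emeasure (M N) (A N j)" "\<lambda>_. 0"] lim by simp
  qed simp
  then have "(\<lambda>N. 1 - enn2real (emeasure (M N) (\<Union>j\<in>J. A N j))) \<longlonglongrightarrow> 1 - 0"
    by (intro tendsto_diff tendsto_const tendsto_enn2real) auto
  moreover have "\<forall>\<^sub>F N in sequentially. 1 - enn2real (emeasure (M N) (\<Union>j\<in>J. A N j))
      = measure (M N) (space (M N) - (\<Union>j\<in>J. A N j))"
    using prob sets
  proof eventually_elim
    case (elim N)
    interpret prob_space "M N" by (fact elim(1))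
    have "(\<Union>j\<in>J. A N j) \<in> events"
      using elim(2) \<open>finite J\<close> by blast
    then show ?case
      using prob_compl by (simp add: measure_def)
  qed
  ultimately show ?thesis
    using tendsto_cong by force
qed

lemma tendsto_measure_all_le_one:
  fixes X :: "nat \<Rightarrow> 'j \<Rightarrow> 'a \<Rightarrow> ennreal" and K :: "'j \<Rightarrow> real"
  assumes prob: "\<forall>\<^sub>F N in sequentially. prob_space (M N)" and "finite J"
    and meas: "\<forall>\<^sub>F N in sequentially. \<forall>j\<in>J. X N j \<in> borel_measurable (M N)"
    and lim: "\<And>j. j \<in> J \<Longrightarrow> (\<lambda>N. \<integral>\<^sup>+x. X N j x \<partial>M N) \<longlonglongrightarrow> 0"
    and K: "\<And>j. j \<in> J \<Longrightarrow> K j > 0"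
  shows "(\<lambda>N. measure (M N) {x\<in>space (M N). \<forall>j\<in>J. X N j x \<le> ennreal (K j)}) \<longlonglongrightarrow> 1"
proof -
  define A where "A N j = {x\<in>space (M N). ennreal (K j) < X N j x}" for N j
  have "{x\<in>space (M N). \<forall>j\<in>J. X N j x \<le> ennreal (K j)} = space (M N) - (\<Union>j\<in>J. A N j)" for N
    unfolding A_def by (auto simp: not_less)
  moreover have "(\<lambda>N. measure (M N) (space (M N) - (\<Union>j\<in>J. A N j))) \<longlonglongrightarrow> 1"
  proof (rule tendsto_measure_diff_Union_one[OF prob \<open>finite J\<close>])
    show "\<forall>\<^sub>F N in sequentially. \<forall>j\<in>J. A N j \<in> sets (M N)"
      using meas by eventually_elim (auto simp: A_def)
    show "(\<lambda>N. emeasure (M N) (A N j)) \<longlonglongrightarrow> 0" if "j \<in> J" for j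
      unfolding A_def using meas that
      by (intro tendsto_emeasure_gt_zero lim K) (auto elim: eventually_mono)
  qed
  ultimately show ?thesis
    by simp
qed

theorem lemma15:
  fixes M :: "nat \<Rightarrow> 'a measure"
    and nu :: "nat \<Rightarrow> 'a \<Rightarrow> nat \<Rightarrow> nat \<Rightarrow> nat"
    and k :: nat and t :: "nat \<Rightarrow> real" and T :: real and K :: "nat \<Rightarrow> real"
  defines "c \<equiv> (\<lambda>N \<omega> r. cN N (nu N \<omega> r))"
  assumes prob: "\<And>N. N \<ge> 2 \<Longrightarrow> prob_space (M N)"
    and meas: "\<And>N r i. N \<ge> 2 \<Longrightarrow> r \<ge> 1 \<Longrightarrow> i \<in> {1..N} \<Longrightarrow>
                 (\<lambda>\<omega>. nu N \<omega> r i) \<in> measurable (M N) (count_space UNIV)"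
    and total: "\<And>N r \<omega>. N \<ge> 2 \<Longrightarrow> r \<ge> 1 \<Longrightarrow> \<omega> \<in> space (M N) \<Longrightarrow>
                 (\<Sum>i=1..N. nu N \<omega> r i) = N"
    and hyp: "\<And>s u. 0 \<le> s \<Longrightarrow> s < u \<Longrightarrow>
                 (\<lambda>N. \<integral>\<^sup>+ \<omega>. sqsum (c N \<omega>) (tau (c N \<omega>) s) (tau (c N \<omega>) u) \<partial>M N)
                   \<longlonglongrightarrow> 0"
    and t0: "t 0 = 0"
    and tmono: "\<And>j. j \<in> {1..k} \<Longrightarrow> t (j - 1) \<le> t j"
    and tk: "t k \<le> T"
    and Kpos: "\<And>j. j \<in> {1..k} \<Longrightarrow> K j > 0"
  shows "(\<lambda>N. measure (M N) {\<omega> \<in> space (M N). \<forall>j\<in>{1..k}.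
            sqsum (c N \<omega>) (tau (c N \<omega>) (t (j - 1))) (tau (c N \<omega>) (t j)) \<le> ennreal (K j)})
         \<longlonglongrightarrow> 1"
proof (rule tendsto_measure_all_le_one[OF _ finite_atLeastAtMost _ _ Kpos])
  have c_meas: "(\<lambda>\<omega>. c N \<omega> r) \<in> borel_measurable (M N)" if "N \<ge> 2" "r \<ge> 1" for N r
    unfolding c_def using meas[OF that] by (rule borel_measurable_cN)
  show "\<forall>\<^sub>F N in sequentially. prob_space (M N)"
    using prob eventually_sequentially by blast
  show "\<forall>\<^sub>F N in sequentially. \<forall>j\<in>{1..k}. (\<lambda>\<omega>. sqsum (c N \<omega>) (tau (c N \<omega>) (t (j - 1)))
      (tau (c N \<omega>) (t j))) \<in> borel_measurable (M N)"
    using eventually_ge_at_top[of 2]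
    by eventually_elim (auto intro!: borel_measurable_sqsum measurable_tau c_meas)
  fix j assume j: "j \<in> {1..k}"
  show "(\<lambda>N. \<integral>\<^sup>+\<omega>. sqsum (c N \<omega>) (tau (c N \<omega>) (t (j - 1))) (tau (c N \<omega>) (t j)) \<partial>M N)
      \<longlonglongrightarrow> 0"
  proof (cases "t (j - 1) < t j")
    case True
    moreover have "0 \<le> t (j - 1)"
      by (rule chain_from_zero_nonneg[where k = k]) (use t0 tmono j in auto)
    ultimately show ?thesis by (rule hyp[rotated])
  next
    case False
    with tmono[OF j] show ?thesis by (simp add: sqsum_same)
  qed
qed

end
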